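(* There is a function $g$ such that for all integers $\ell\ge 3$ and $t,k\ge 1$, every $\mathcal{O}_k$-free graph $G$ with no $K_{t,t}$ subgraph contains a set $X$ of at most $g(\ell,t,k)$ vertices such that $G-X$ has girth at least $\ell$.
   Context: All graphs are finite and simple. Two vertex-disjoint subgraphs are independent if there is no edge between them. A graph $G$ is $\mathcal{O}_k$-free if it does not contain $k$ pairwise vertex-disjoint and pairwise independent cycles; equivalently, $G$ has no induced subgraph isomorphic to a disjoint union of $k$ cycles. The girth of a graph is the minimum length of a cycle in it (infinite if the graph is acyclic). *)

theory Defs
  imports Main "HOL-Library.Extended_Nat"
begin

definition simple_graph :: "nat set \<Rightarrow> (nat \<Rightarrow> nat \<Rightarrow> bool) \<Rightarrow> bool" where
  "simple_graph V E \<longleftrightarrow> finite V \<and> (\<forall>u v. E u v \<longrightarrow> u \<in> V \<and> v \<in> V)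
     \<and> (\<forall>u v. E u v \<longrightarrow> E v u) \<and> (\<forall>u. \<not> E u u)"

definition is_cycle :: "nat set \<Rightarrow> (nat \<Rightarrow> nat \<Rightarrow> bool) \<Rightarrow> nat list \<Rightarrow> bool" where
  "is_cycle V E c \<longleftrightarrow> length c \<ge> 3 \<and> distinct c \<and> set c \<subseteq> V
     \<and> (\<forall>i < length c. E (c ! i) (c ! ((i + 1) mod length c)))"

definition independent_sets :: "(nat \<Rightarrow> nat \<Rightarrow> bool) \<Rightarrow> nat set \<Rightarrow> nat set \<Rightarrow> bool" where
  "independent_sets E A B \<longleftrightarrow> A \<inter> B = {} \<and> (\<forall>u\<in>A. \<forall>v\<in>B. \<not> E u v)"

definition Ok_free :: "nat \<Rightarrow> nat set \<Rightarrow> (nat \<Rightarrow> nat \<Rightarrow> bool) \<Rightarrow> bool" where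
  "Ok_free k V E \<longleftrightarrow> \<not> (\<exists>cs :: nat list list. length cs = k
       \<and> (\<forall>i < k. is_cycle V E (cs ! i))
       \<and> (\<forall>i < k. \<forall>j < k. i \<noteq> j \<longrightarrow> independent_sets E (set (cs ! i)) (set (cs ! j))))"

definition has_Ktt :: "nat \<Rightarrow> nat set \<Rightarrow> (nat \<Rightarrow> nat \<Rightarrow> bool) \<Rightarrow> bool" where
  "has_Ktt t V E \<longleftrightarrow> (\<exists>A B. A \<subseteq> V \<and> B \<subseteq> V \<and> A \<inter> B = {} \<and> card A = t \<and> card B = t
       \<and> (\<forall>a\<in>A. \<forall>b\<in>B. E a b))"

definition del_edges :: "(nat \<Rightarrow> nat \<Rightarrow> bool) \<Rightarrow> nat set \<Rightarrow> nat \<Rightarrow> nat \<Rightarrow> bool" where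
  "del_edges E X = (\<lambda>u v. E u v \<and> u \<notin> X \<and> v \<notin> X)"

text \<open>Girth: minimum cycle length, infinite if acyclic.\<close>
definition girth :: "nat set \<Rightarrow> (nat \<Rightarrow> nat \<Rightarrow> bool) \<Rightarrow> enat" where
  "girth V E = (INF c \<in> {c. is_cycle V E c}. enat (length c))"

end

theory Submission
  imports Defs "HOL-Library.Ramsey"
begin

text \<open>Take a maximal family of pairwise vertex-disjoint cycles of length less than l.
  Deleting its vertices leaves a graph of girth at least l, and costs at most l vertices per
  cycle, so it suffices to bound the size of the family. Colour each pair of its cycles (in
  a fixed order) by whether they are joined by an edge and, if so, by the positions of the
  ends of one such edge on the two cycles: at most 1 + l * l colours. By Ramsey's theorem
  a large family contains k + 2t cycles all of whose pairs share one colour. If it says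
  ``no edge'', k of them are pairwise independent; otherwise, for fixed positions p and q,
  the p-th vertices of the first t cycles are all adjacent to the q-th vertices of the next
  t cycles, which is a K_{t,t}.\<close>

lemma ramsey_finite_colour_set:
  fixes C :: "'c set"
  assumes "finite C"
  shows "\<exists>N::nat. \<forall>f \<in> nsets {..<N} r \<rightarrow> C. \<exists>H \<in> nsets {..<N} n. \<exists>c. f ` nsets H r \<subseteq> {c}"
proof -
  obtain h where h: "bij_betw h C {0..<card C}"
    using ex_bij_betw_finite_nat[OF assms] by blast
  obtain N :: nat where N: "partn_lst {..<N} (replicate (card C) n) r"
    using ramsey_full by blast
  have "\<exists>H \<in> nsets {..<N} n. \<exists>c. f ` nsets H r \<subseteq> {c}" if f: "f \<in> nsets {..<N} r \<rightarrow> C" for f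
  proof -
    have "h \<circ> f \<in> nsets {..<N} r \<rightarrow> {..<card C}"
      using f bij_betwE[OF h] by fastforce
    then obtain i H where i: "i < card C" and H: "H \<in> nsets {..<N} n"
        and mono: "(h \<circ> f) ` nsets H r \<subseteq> {i}"
      using partn_lstE[OF N] by (metis length_replicate nth_replicate)
    have "f ` nsets H r \<subseteq> {the_inv_into C h i}"
    proof
      fix y assume "y \<in> f ` nsets H r"
      then obtain S where "S \<in> nsets H r" "y = f S" by blast
      moreover have "nsets H r \<subseteq> nsets {..<N} r"
        using H by (simp add: nsets_def subset_iff)
      ultimately have "y \<in> C" "h y = i" using f mono by auto
      then show "y \<in> {the_inv_into C h i}"
        using h by (metis bij_betw_def singletonI the_inv_into_f_f)
    qed
    then show ?thesis using H by blast
  qed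
  then show ?thesis by blast
qed

lemma independent_sets_commute:
  "symp E \<Longrightarrow> independent_sets E A B \<Longrightarrow> independent_sets E B A"
  by (auto simp: independent_sets_def dest: sympD)

lemma not_Ok_free_if_independent_cycles:
  assumes "finite H" "card H = k"
    and cycles: "\<forall>i\<in>H. is_cycle V E (cs ! i)"
    and independent: "\<forall>i\<in>H. \<forall>j\<in>H. i \<noteq> j \<longrightarrow> independent_sets E (set (cs ! i)) (set (cs ! j))"
  shows "\<not> Ok_free k V E"
proof -
  define js where "js = sorted_list_of_set H"
  have js: "length js = k" "distinct js" "set js = H"
    using assms(1,2) by (auto simp: js_def)
  have "\<forall>i<k. is_cycle V E (map ((!) cs) js ! i)"
    using cycles js by (metis nth_map nth_mem)
  moreover have "\<forall>i<k. \<forall>j<k. i \<noteq> j \<longrightarrow>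
      independent_sets E (set (map ((!) cs) js ! i)) (set (map ((!) cs) js ! j))"
    using independent js by (auto simp: nth_eq_iff_index_eq)
  ultimately show ?thesis
    unfolding Ok_free_def using js(1) by (metis length_map)
qed

lemma has_Ktt_if_transversal_edges:
  assumes "card L = t" "card U = t" "L \<inter> U = {}"
    and in_part: "\<forall>a\<in>L. x a \<in> S a" "\<forall>b\<in>U. y b \<in> S b"
    and parts: "\<forall>i\<in>L \<union> U. S i \<subseteq> V"
    and disjoint: "\<forall>i\<in>L \<union> U. \<forall>j\<in>L \<union> U. i \<noteq> j \<longrightarrow> S i \<inter> S j = {}"
    and edges: "\<forall>a\<in>L. \<forall>b\<in>U. E (x a) (y b)"
  shows "has_Ktt t V E"
proof -
  have separated: "i = j" if "i \<in> L \<union> U" "j \<in> L \<union> U" "v \<in> S i" "v \<in> S j" for i j v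
    using disjoint that by blast
  have "inj_on x L"
  proof (rule inj_onI)
    fix a a' assume "a \<in> L" "a' \<in> L" "x a = x a'"
    then show "a = a'"
      using separated[of a a' "x a"] in_part(1) by (metis UnI1)
  qed
  moreover have "inj_on y U"
  proof (rule inj_onI)
    fix b b' assume "b \<in> U" "b' \<in> U" "y b = y b'"
    then show "b = b'"
      using separated[of b b' "y b"] in_part(2) by (metis UnI2)
  qed
  ultimately have "card (x ` L) = t" "card (y ` U) = t"
    using assms(1,2) by (simp_all add: card_image)
  moreover have "x ` L \<inter> y ` U = {}"
  proof -
    have "x a \<noteq> y b" if "a \<in> L" "b \<in> U" for a b
      using separated[of a b "x a"] in_part that assms(3) by (metis IntI UnI1 UnI2 empty_iff)
    then show ?thesis
      by blast
  qed
  moreover have "x ` L \<subseteq> V" "y ` U \<subseteq> V"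
    using in_part parts by auto
  ultimately show ?thesis
    unfolding has_Ktt_def using edges by (intro exI[of _ "x ` L"] exI[of _ "y ` U"]) auto
qed

lemma obtain_lower_upper_subsets:
  fixes H :: "'a::linorder set"
  assumes "finite H" "2 * t \<le> card H"
  obtains L U where "L \<subseteq> H" "U \<subseteq> H" "card L = t" "card U = t" "\<forall>a\<in>L. \<forall>b\<in>U. a < b"
proof
  define hs where "hs = sorted_list_of_set H"
  have hs: "length hs = card H" "distinct hs" "set hs = H" "sorted_wrt (<) hs"
    using assms(1) by (auto simp: hs_def)
  show "set (take t hs) \<subseteq> H" "set (take t (drop t hs)) \<subseteq> H"
    using hs(3) by (auto dest: in_set_takeD in_set_dropD)
  show "card (set (take t hs)) = t" "card (set (take t (drop t hs))) = t"
    using hs(1,2) assms(2) by (simp_all add: distinct_card)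
  have "sorted_wrt (<) (take t hs @ drop t hs)"
    using hs(4) by simp
  then show "\<forall>a\<in>set (take t hs). \<forall>b\<in>set (take t (drop t hs)). a < b"
    unfolding sorted_wrt_append by (meson in_set_takeD)
qed

definition short_cycle_packing :: "nat \<Rightarrow> nat set \<Rightarrow> (nat \<Rightarrow> nat \<Rightarrow> bool) \<Rightarrow> nat list list \<Rightarrow> bool" where
  "short_cycle_packing l V E cs \<longleftrightarrow> (\<forall>c\<in>set cs. is_cycle V E c \<and> length c < l)
     \<and> distinct cs \<and> pairwise (\<lambda>c d. set c \<inter> set d = {}) (set cs)"

definition edge_position :: "('a \<Rightarrow> 'a \<Rightarrow> bool) \<Rightarrow> 'a list \<Rightarrow> 'a list \<Rightarrow> (nat \<times> nat) option" where
  "edge_position E c d =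
     (if \<exists>p q. p < length c \<and> q < length d \<and> E (c ! p) (d ! q)
      then Some (SOME (p, q). p < length c \<and> q < length d \<and> E (c ! p) (d ! q))
      else None)"

lemma edge_position_SomeD:
  assumes "edge_position E c d = Some (p, q)"
  shows "p < length c \<and> q < length d \<and> E (c ! p) (d ! q)"
proof -
  let ?P = "\<lambda>(p, q). p < length c \<and> q < length d \<and> E (c ! p) (d ! q)"
  have "\<exists>x. ?P x" and "(p, q) = (SOME x. ?P x)"
    using assms by (auto simp: edge_position_def split: if_splits)
  then show ?thesis
    by (metis (mono_tags, lifting) case_prod_conv someI_ex)
qed

lemma edge_position_NoneD:
  "edge_position E c d = None \<Longrightarrow> u \<in> set c \<Longrightarrow> v \<in> set d \<Longrightarrow> \<not> E u v"
  by (auto simp: edge_position_def in_set_conv_nth split: if_splits)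

lemma edge_position_range:
  "edge_position E c d \<in> insert None (Some ` ({..<length c} \<times> {..<length d}))"
  by (cases "edge_position E c d") (auto dest: edge_position_SomeD)

lemma short_cycle_packing_nth:
  "short_cycle_packing l V E cs \<Longrightarrow> i < length cs \<Longrightarrow> is_cycle V E (cs ! i) \<and> length (cs ! i) < l"
  by (simp add: short_cycle_packing_def)

lemma short_cycle_packing_nth_disjoint:
  assumes "short_cycle_packing l V E cs" "i < length cs" "j < length cs" "i \<noteq> j"
  shows "set (cs ! i) \<inter> set (cs ! j) = {}"
proof -
  have "cs ! i \<noteq> cs ! j"
    using assms by (simp add: short_cycle_packing_def nth_eq_iff_index_eq)
  then show ?thesis
    using assms by (simp add: short_cycle_packing_def pairwise_def)
qed

lemma not_Ok_free_if_no_edge_colour: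
  assumes "symp E" and packing: "short_cycle_packing l V E cs"
    and H: "H \<subseteq> {..<length cs}" "finite H" "k \<le> card H"
    and no_edge: "\<forall>a\<in>H. \<forall>b\<in>H. a < b \<longrightarrow> edge_position E (cs ! a) (cs ! b) = None"
  shows "\<not> Ok_free k V E"
proof -
  obtain H' where H': "H' \<subseteq> H" "card H' = k" "finite H'"
    using obtain_subset_with_card_n[OF H(3)] by blast
  have "independent_sets E (set (cs ! a)) (set (cs ! b))"
    if "a \<in> H" "b \<in> H" "a < b" for a b
    using that H(1) no_edge edge_position_NoneD short_cycle_packing_nth_disjoint[OF packing]
    unfolding independent_sets_def by (metis less_irrefl lessThan_iff subsetD)
  then have "independent_sets E (set (cs ! a)) (set (cs ! b))"
    if "a \<in> H'" "b \<in> H'" "a \<noteq> b" for a b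
    using that H'(1) independent_sets_commute[OF assms(1)] by (metis linorder_neqE subsetD)
  moreover have "\<forall>i\<in>H'. is_cycle V E (cs ! i)"
    using H'(1) H(1) short_cycle_packing_nth[OF packing] by blast
  ultimately show ?thesis
    using not_Ok_free_if_independent_cycles[OF H'(3,2)] by blast
qed

lemma has_Ktt_if_edge_colour:
  assumes packing: "short_cycle_packing l V E cs"
    and H: "H \<subseteq> {..<length cs}" "finite H" "2 * t \<le> card H"
    and edge_at: "\<forall>a\<in>H. \<forall>b\<in>H. a < b \<longrightarrow> edge_position E (cs ! a) (cs ! b) = Some (p, q)"
  shows "has_Ktt t V E"
proof -
  obtain L U where LU: "L \<subseteq> H" "U \<subseteq> H" "card L = t" "card U = t"
    and below: "\<forall>a\<in>L. \<forall>b\<in>U. a < b"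
    using obtain_lower_upper_subsets[OF H(2,3)] by blast
  have edge: "p < length (cs ! a) \<and> q < length (cs ! b) \<and> E (cs ! a ! p) (cs ! b ! q)"
    if "a \<in> L" "b \<in> U" for a b
  proof -
    have "a \<in> H" "b \<in> H" "a < b"
      using LU below that by auto
    then show ?thesis
      using edge_at edge_position_SomeD by blast
  qed
  \<comment> \<open>Position p is known to lie on a cycle of L only through an edge to a cycle of U.\<close>
  have partner: "L \<noteq> {} \<longleftrightarrow> U \<noteq> {}"
    using LU(1-4) H(2) finite_subset[of _ H] by force
  show ?thesis
  proof (rule has_Ktt_if_transversal_edges)
    show "card L = t" "card U = t"
      using LU by simp_all
    show "L \<inter> U = {}"
      using below by fastforce
    show "\<forall>a\<in>L. cs ! a ! p \<in> set (cs ! a)" "\<forall>b\<in>U. cs ! b ! q \<in> set (cs ! b)"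
      using edge partner by (meson all_not_in_conv nth_mem)+
    have LU_idx: "L \<union> U \<subseteq> {..<length cs}"
      using LU H(1) by blast
    then show "\<forall>i\<in>L \<union> U. set (cs ! i) \<subseteq> V"
      using short_cycle_packing_nth[OF packing] unfolding is_cycle_def by blast
    show "\<forall>i\<in>L \<union> U. \<forall>j\<in>L \<union> U. i \<noteq> j \<longrightarrow> set (cs ! i) \<inter> set (cs ! j) = {}"
      using LU_idx short_cycle_packing_nth_disjoint[OF packing] by blast
    show "\<forall>a\<in>L. \<forall>b\<in>U. E (cs ! a ! p) (cs ! b ! q)"
      using edge by blast
  qed
qed

lemma short_cycle_packing_length_less:
  assumes "symp E" "Ok_free k V E" "\<not> has_Ktt t V E"
    and packing: "short_cycle_packing l V E cs"
    and ramsey: "\<forall>f \<in> nsets {..<N} 2 \<rightarrow> insert None (Some ` ({..<l} \<times> {..<l})).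
                   \<exists>H \<in> nsets {..<N} (k + 2 * t). \<exists>c. f ` nsets H 2 \<subseteq> {c}"
  shows "length cs < N"
proof (rule ccontr)
  assume "\<not> length cs < N"
  then have idx: "{..<N} \<subseteq> {..<length cs}"
    by auto
  define colour where "colour S = edge_position E (cs ! Min S) (cs ! Max S)" for S
  have "colour \<in> nsets {..<N} 2 \<rightarrow> insert None (Some ` ({..<l} \<times> {..<l}))"
  proof
    fix S assume "S \<in> nsets {..<N} 2"
    then obtain a b where "S = {a, b}" "a < N" "b < N"
      by (auto elim: nsets2_E)
    then have "length (cs ! Min S) < l" "length (cs ! Max S) < l"
      using short_cycle_packing_nth[OF packing] idx by (auto simp: min_def max_def)
    then show "colour S \<in> insert None (Some ` ({..<l} \<times> {..<l}))"
      using edge_position_range[of E "cs ! Min S" "cs ! Max S"]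
      unfolding colour_def by fastforce
  qed
  then obtain H c where H: "H \<in> nsets {..<N} (k + 2 * t)" and mono: "colour ` nsets H 2 \<subseteq> {c}"
    using ramsey by blast
  have H_props: "H \<subseteq> {..<length cs}" "finite H" "card H = k + 2 * t"
    using H idx by (auto simp: nsets_def)
  have colour_pair: "\<forall>a\<in>H. \<forall>b\<in>H. a < b \<longrightarrow> edge_position E (cs ! a) (cs ! b) = c"
  proof (intro ballI impI)
    fix a b assume "a \<in> H" "b \<in> H" "a < b"
    then have "colour {a, b} = c"
      using mono by (simp add: image_subset_iff)
    then show "edge_position E (cs ! a) (cs ! b) = c"
      using \<open>a < b\<close> by (simp add: colour_def)
  qed
  show False
  proof (cases c)
    case None
    then show False
      using not_Ok_free_if_no_edge_colour[OF assms(1) packing H_props(1,2)] H_props(3)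
        colour_pair assms(2) by simp
  next
    case (Some pq)
    then show False
      using has_Ktt_if_edge_colour[OF packing H_props(1,2), of t "fst pq" "snd pq"] H_props(3)
        colour_pair assms(3) by simp
  qed
qed

lemma short_cycle_packing_bounded:
  "\<exists>N. \<forall>V E cs. symp E \<longrightarrow> Ok_free k V E \<longrightarrow> \<not> has_Ktt t V E \<longrightarrow>
     short_cycle_packing l V E cs \<longrightarrow> length cs < N"
proof -
  have "finite (insert None (Some ` ({..<l} \<times> {..<l})))"
    by simp
  then obtain N :: nat where N: "\<forall>f \<in> nsets {..<N} 2 \<rightarrow> insert None (Some ` ({..<l} \<times> {..<l})).
      \<exists>H \<in> nsets {..<N} (k + 2 * t). \<exists>c. f ` nsets H 2 \<subseteq> {c}"
    by (rule exE[OF ramsey_finite_colour_set]) blast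
  show ?thesis
  proof (intro exI allI impI)
    fix V E cs
    assume "symp E" "Ok_free k V E" "\<not> has_Ktt t V E" "short_cycle_packing l V E cs"
    then show "length cs < N"
      by (rule short_cycle_packing_length_less[OF _ _ _ _ N])
  qed
qed

lemma short_cycle_packing_snoc:
  "short_cycle_packing l V E (cs @ [c]) \<longleftrightarrow> short_cycle_packing l V E cs
     \<and> is_cycle V E c \<and> length c < l \<and> set c \<inter> (\<Union>d\<in>set cs. set d) = {}"
proof -
  have "c \<notin> set cs" if "is_cycle V E c" "set c \<inter> (\<Union>d\<in>set cs. set d) = {}"
  proof
    assume "c \<in> set cs"
    then have "set c \<subseteq> (\<Union>d\<in>set cs. set d)"
      by (rule UN_upper)
    then have "set c = {}"
      using that(2) by (simp add: Int_absorb2)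
    then show False
      using that(1) by (simp add: is_cycle_def)
  qed
  moreover have "set c \<inter> (\<Union>d\<in>set cs. set d) = {} \<longleftrightarrow> (\<forall>d\<in>set cs. d \<noteq> c \<longrightarrow> set c \<inter> set d = {})"
    if "c \<notin> set cs"
    using that by auto
  ultimately show ?thesis
    unfolding short_cycle_packing_def by (auto simp: pairwise_insert)
qed

lemma exists_maximal_short_cycle_packing:
  assumes "\<forall>cs. short_cycle_packing l V E cs \<longrightarrow> length cs < N"
  obtains cs where "short_cycle_packing l V E cs" "\<forall>c. \<not> short_cycle_packing l V E (cs @ [c])"
proof -
  have "short_cycle_packing l V E []"
    by (simp add: short_cycle_packing_def)
  then obtain cs where cs: "short_cycle_packing l V E cs"
      and greatest: "\<forall>ds. short_cycle_packing l V E ds \<longrightarrow> length ds \<le> length cs"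
    using Lattices_Big.ex_has_greatest_nat[of _ "[]" length N] assms by blast
  have "\<not> short_cycle_packing l V E (cs @ [c])" for c
    using greatest by fastforce
  then show thesis
    using cs that by blast
qed

lemma girth_ge_if_maximal_short_cycle_packing:
  assumes "short_cycle_packing l V E cs" "\<forall>c. \<not> short_cycle_packing l V E (cs @ [c])"
  defines "X \<equiv> \<Union>c\<in>set cs. set c"
  shows "enat l \<le> girth (V - X) (del_edges E X)"
  unfolding girth_def
proof (rule INF_greatest)
  fix c assume "c \<in> {c. is_cycle (V - X) (del_edges E X) c}"
  then have "is_cycle V E c" "set c \<inter> X = {}"
    by (auto simp: is_cycle_def del_edges_def)
  then have "\<not> length c < l"
    using assms(1,2) short_cycle_packing_snoc[of l V E cs c] unfolding X_def by blast
  then show "enat l \<le> enat (length c)"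
    by simp
qed

lemma card_Union_short_cycle_packing:
  assumes "short_cycle_packing l V E cs"
  shows "card (\<Union>c\<in>set cs. set c) \<le> length cs * l"
proof -
  have "card (\<Union>c\<in>set cs. set c) \<le> (\<Sum>c\<in>set cs. card (set c))"
    by (rule card_UN_le) simp
  also have "\<dots> \<le> (\<Sum>c\<in>set cs. l)"
  proof (rule sum_mono)
    fix c assume "c \<in> set cs"
    then have "length c < l"
      using assms by (simp add: short_cycle_packing_def)
    then show "card (set c) \<le> l"
      using card_length[of c] by linarith
  qed
  also have "\<dots> \<le> length cs * l"
    by (simp add: card_length)
  finally show ?thesis .
qed

lemma short_cycle_hitting_set:
  assumes "\<forall>cs. short_cycle_packing l V E cs \<longrightarrow> length cs < N"
  shows "\<exists>X. X \<subseteq> V \<and> card X \<le> N * l \<and> enat l \<le> girth (V - X) (del_edges E X)"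
proof -
  obtain cs where cs: "short_cycle_packing l V E cs"
      and maximal: "\<forall>c. \<not> short_cycle_packing l V E (cs @ [c])"
    using exists_maximal_short_cycle_packing[OF assms] by blast
  have "(\<Union>c\<in>set cs. set c) \<subseteq> V"
    using cs unfolding short_cycle_packing_def is_cycle_def by blast
  moreover have "card (\<Union>c\<in>set cs. set c) \<le> N * l"
    using card_Union_short_cycle_packing[OF cs] assms cs
    by (meson le_trans less_imp_le_nat mult_le_mono1)
  ultimately show ?thesis
    using girth_ge_if_maximal_short_cycle_packing[OF cs maximal] by blast
qed

theorem mainTheorem7:
  shows "\<exists>g :: nat \<Rightarrow> nat \<Rightarrow> nat \<Rightarrow> nat. \<forall>l t k. l \<ge> 3 \<longrightarrow> t \<ge> 1 \<longrightarrow> k \<ge> 1 \<longrightarrow>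
    (\<forall>V E. simple_graph V E \<longrightarrow> Ok_free k V E \<longrightarrow> \<not> has_Ktt t V E \<longrightarrow>
      (\<exists>X. X \<subseteq> V \<and> card X \<le> g l t k \<and> girth (V - X) (del_edges E X) \<ge> enat l))"
proof -
  define N where "N l t k = (SOME N. \<forall>V E cs. symp E \<longrightarrow> Ok_free k V E \<longrightarrow>
      \<not> has_Ktt t V E \<longrightarrow> short_cycle_packing l V E cs \<longrightarrow> length cs < N)" for l t k
  have N: "\<forall>V E cs. symp E \<longrightarrow> Ok_free k V E \<longrightarrow> \<not> has_Ktt t V E \<longrightarrow>
      short_cycle_packing l V E cs \<longrightarrow> length cs < N l t k" for l t k
    unfolding N_def by (rule someI_ex[OF short_cycle_packing_bounded])
  have "\<exists>X. X \<subseteq> V \<and> card X \<le> N l t k * l \<and> enat l \<le> girth (V - X) (del_edges E X)"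
    if "simple_graph V E" "Ok_free k V E" "\<not> has_Ktt t V E" for l t k V E
  proof (rule short_cycle_hitting_set)
    have "symp E"
      using that(1) by (simp add: simple_graph_def symp_def)
    then show "\<forall>cs. short_cycle_packing l V E cs \<longrightarrow> length cs < N l t k"
      using N that(2,3) by blast
  qed
  then show ?thesis
    by (intro exI[of _ "\<lambda>l t k. N l t k * l"]) blast
qed

end
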